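(* Assume $f$ is odd. Then the representation $\operatorname{Ind}_{C_6\rtimes\mathbb{Z}}^{Q\rtimes\mathbb{Z}}\phi_2$ is irreducible, and there exists a surjective homomorphism of $Q\rtimes\mathbb{Z}$-representations \[ \Psi\colon \operatorname{Ind}_{C}^{Q\rtimes\mathbb{Z}}\phi_1\longrightarrow \operatorname{Ind}_{C_6\rtimes\mathbb{Z}}^{Q\rtimes\mathbb{Z}}\phi_2 . \]
   Context: All representations are over $\overline{\mathbb{Q}}_\ell$, $\ell$ an odd prime. Let $q=2^f$. Let $Q=\{g(\alpha,\beta,\gamma)\}\subset \mathit{GL}_3(\mathbb{F}_4)$ be the group of upper triangular matrices $g(\alpha,\beta,\gamma)=\begin{pmatrix}\alpha&\beta&\gamma\\0&\alpha^2&\beta^2\\0&0&\alpha\end{pmatrix}$ with $\alpha\in\mathbb{F}_4^\times$, $\beta,\gamma\in\mathbb{F}_4$ and $\alpha\gamma^2+\alpha^2\gamma=\beta^3$ (a group of order 24). Let $Q\rtimes\mathbb{Z}$ be the semidirect product where $r\in\mathbb{Z}$ acts on $Q$ by $g(\alpha,\beta,\gamma)\mapsto g(\alpha^{q^r},\beta^{q^r},\gamma^{q^r})$. Fix $\bar\zeta_3\in\mathbb{F}_4\setminus\mathbb{F}_2$. Let $Q_8=\{g(1,\beta,\gamma)\in Q\}$; let $C_4\subset Q_8$ be the cyclic subgroup of order 4 generated by $g(1,1,\bar\zeta_3)$; let $Z=\{g(1,0,0),g(1,0,1)\}$ (the center of $Q$); let $C_3=\{g(\alpha,0,0)\}$ and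 $C_6=Z\times C_3$. Fix a faithful character $\phi$ of $C_4$ and a square root $(-2)^{1/2}\in\overline{\mathbb{Q}}_\ell$; write $(-2)^{m/2}=((-2)^{1/2})^m$. Let $C\subset Q_8\rtimes\mathbb{Z}$ be the subgroup of $(g,n)$ with $g\in C_4$ if $n$ is even and $g\in Q_8\setminus C_4$ if $n$ is odd. Fix $\eta\in\overline{\mathbb{Q}}_\ell$ with $\eta^2+(-2)^{(f+1)/2}\eta+q=0$. Let $\phi_1$ be the character of $C$ with $\phi_1((g(1,\bar\zeta_3,\bar\zeta_3),1))=\eta q^{-1}$ and $\phi_1((g(1,0,0),2))=-q^{-1}$ (these two elements generate $C$). Let $\phi_2$ be the character of $C_6\rtimes\mathbb{Z}$ with $\phi_2|_{C_6}=\phi|_Z\otimes 1_{C_3}$ and $\phi_2((g(1,0,0),1))=(-2)^{f/2}q^{-1}$. *)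

theory Defs
  imports "HOL-Computational_Algebra.Polynomial"
begin

section \<open>The field F_4 = {0, 1, zeta, zeta^2} with zeta^2 = zeta + 1\<close>

datatype F4 = F0 | F1 | Zt | Zt2

fun f4add :: "F4 \<Rightarrow> F4 \<Rightarrow> F4" where
  "f4add F0 y = y"
| "f4add x F0 = x"
| "f4add F1 F1 = F0"
| "f4add F1 Zt = Zt2"
| "f4add F1 Zt2 = Zt"
| "f4add Zt F1 = Zt2"
| "f4add Zt Zt = F0"
| "f4add Zt Zt2 = F1"
| "f4add Zt2 F1 = Zt"
| "f4add Zt2 Zt = F1"
| "f4add Zt2 Zt2 = F0"

fun f4mul :: "F4 \<Rightarrow> F4 \<Rightarrow> F4" where
  "f4mul F0 y = F0"
| "f4mul x F0 = F0"
| "f4mul F1 y = y"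
| "f4mul x F1 = x"
| "f4mul Zt Zt = Zt2"
| "f4mul Zt Zt2 = F1"
| "f4mul Zt2 Zt = F1"
| "f4mul Zt2 Zt2 = Zt"

definition frob :: "F4 \<Rightarrow> F4" where "frob x = f4mul x x"

text \<open>x \<mapsto> x^(q^r) for q = 2^f and r an integer (for r < 0 the inverse map).\<close>
definition tw :: "nat \<Rightarrow> int \<Rightarrow> F4 \<Rightarrow> F4" where
  "tw f r x = (if 0 \<le> r then (frob ^^ (f * nat r)) x else inv (frob ^^ (f * nat (- r))) x)"

section \<open>3x3 matrices over F_4 (entries with indices \<ge> 3 are 0)\<close>

type_synonym mat3 = "nat \<Rightarrow> nat \<Rightarrow> F4"

definition mmul :: "mat3 \<Rightarrow> mat3 \<Rightarrow> mat3" where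
  "mmul A B = (\<lambda>i j. if i < 3 \<and> j < 3 then
      f4add (f4add (f4mul (A i 0) (B 0 j)) (f4mul (A i 1) (B 1 j))) (f4mul (A i 2) (B 2 j))
    else F0)"

definition gmat :: "F4 \<Rightarrow> F4 \<Rightarrow> F4 \<Rightarrow> mat3" where
  "gmat a b c = (\<lambda>i j.
     if i = 0 \<and> j = 0 then a else if i = 0 \<and> j = 1 then b else if i = 0 \<and> j = 2 then c
     else if i = 1 \<and> j = 1 then f4mul a a else if i = 1 \<and> j = 2 then f4mul b b
     else if i = 2 \<and> j = 2 then a else F0)"

definition Qcond :: "F4 \<Rightarrow> F4 \<Rightarrow> F4 \<Rightarrow> bool" where
  "Qcond a b c \<longleftrightarrow> a \<noteq> F0 \<and>
     f4add (f4mul a (f4mul c c)) (f4mul (f4mul a a) c) = f4mul b (f4mul b b)"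

definition Qgrp :: "mat3 set" where
  "Qgrp = {gmat a b c | a b c. Qcond a b c}"

definition twmat :: "nat \<Rightarrow> int \<Rightarrow> mat3 \<Rightarrow> mat3" where
  "twmat f r A = (\<lambda>i j. tw f r (A i j))"

type_synonym elt = "mat3 \<times> int"

definition QZ :: "elt set" where "QZ = Qgrp \<times> UNIV"

definition gmul :: "nat \<Rightarrow> elt \<Rightarrow> elt \<Rightarrow> elt" where
  "gmul f x y = (mmul (fst x) (twmat f (snd x) (fst y)), snd x + snd y)"

definition Q8 :: "mat3 set" where "Q8 = {A \<in> Qgrp. A 0 0 = F1}"

definition C4 :: "F4 \<Rightarrow> mat3 set" where
  "C4 z = {((\<lambda>A. mmul (gmat F1 F1 z) A) ^^ n) (gmat F1 F0 F0) | n. True}"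

definition Zc :: "mat3 set" where "Zc = {gmat F1 F0 F0, gmat F1 F0 F1}"

definition C3 :: "mat3 set" where "C3 = {gmat a F0 F0 | a. a \<noteq> F0}"

definition C6 :: "mat3 set" where "C6 = {mmul x y | x y. x \<in> Zc \<and> y \<in> C3}"

definition Csub :: "F4 \<Rightarrow> elt set" where
  "Csub z = {(g, n) | g n. g \<in> Q8 \<and> (even n \<longrightarrow> g \<in> C4 z) \<and> (odd n \<longrightarrow> g \<notin> C4 z)}"

definition C6Z :: "elt set" where "C6Z = C6 \<times> UNIV"

definition is_char :: "'g set \<Rightarrow> ('g \<Rightarrow> 'g \<Rightarrow> 'g) \<Rightarrow> ('g \<Rightarrow> 'k::field) \<Rightarrow> bool" where
  "is_char H mul \<chi> \<longleftrightarrow> (\<forall>x\<in>H. \<chi> x \<noteq> 0) \<and> (\<forall>x\<in>H. \<forall>y\<in>H. \<chi> (mul x y) = \<chi> x * \<chi> y)"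

definition Ind :: "'g set \<Rightarrow> ('g \<Rightarrow> 'g \<Rightarrow> 'g) \<Rightarrow> 'g set \<Rightarrow> ('g \<Rightarrow> 'k::field) \<Rightarrow> ('g \<Rightarrow> 'k) set" where
  "Ind G mul H \<chi> = {F. (\<forall>x. x \<notin> G \<longrightarrow> F x = 0) \<and> (\<forall>h\<in>H. \<forall>x\<in>G. F (mul h x) = \<chi> h * F x)}"

definition ract :: "'g set \<Rightarrow> ('g \<Rightarrow> 'g \<Rightarrow> 'g) \<Rightarrow> 'g \<Rightarrow> ('g \<Rightarrow> 'k::field) \<Rightarrow> ('g \<Rightarrow> 'k)" where
  "ract G mul g F = (\<lambda>x. if x \<in> G then F (mul x g) else 0)"

definition is_subspace :: "('g \<Rightarrow> 'k::field) set \<Rightarrow> bool" where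
  "is_subspace W \<longleftrightarrow> (\<lambda>_. 0) \<in> W \<and> (\<forall>F\<in>W. \<forall>F'\<in>W. (\<lambda>x. F x + F' x) \<in> W)
     \<and> (\<forall>c. \<forall>F\<in>W. (\<lambda>x. c * F x) \<in> W)"

definition irreducible_rep :: "'g set \<Rightarrow> ('g \<Rightarrow> 'g \<Rightarrow> 'g) \<Rightarrow> ('g \<Rightarrow> 'k::field) set \<Rightarrow> bool" where
  "irreducible_rep G mul V \<longleftrightarrow> V \<noteq> {\<lambda>_. 0} \<and>
     (\<forall>W. is_subspace W \<and> W \<subseteq> V \<and> (\<forall>g\<in>G. \<forall>F\<in>W. ract G mul g F \<in> W)
        \<longrightarrow> W = {\<lambda>_. 0} \<or> W = V)"

definition rep_hom :: "'g set \<Rightarrow> ('g \<Rightarrow> 'g \<Rightarrow> 'g) \<Rightarrow> ('g \<Rightarrow> 'k::field) set \<Rightarrow> ('g \<Rightarrow> 'k) set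
    \<Rightarrow> (('g \<Rightarrow> 'k) \<Rightarrow> ('g \<Rightarrow> 'k)) \<Rightarrow> bool" where
  "rep_hom G mul V1 V2 \<Psi> \<longleftrightarrow> (\<forall>F\<in>V1. \<Psi> F \<in> V2)
     \<and> (\<forall>F\<in>V1. \<forall>F'\<in>V1. \<Psi> (\<lambda>x. F x + F' x) = (\<lambda>x. \<Psi> F x + \<Psi> F' x))
     \<and> (\<forall>c. \<forall>F\<in>V1. \<Psi> (\<lambda>x. c * F x) = (\<lambda>x. c * \<Psi> F x))
     \<and> (\<forall>g\<in>G. \<forall>F\<in>V1. \<Psi> (ract G mul g F) = ract G mul g (\<Psi> F))"

definition alg_closed :: "'k::field itself \<Rightarrow> bool" where
  "alg_closed _ \<longleftrightarrow> (\<forall>p :: 'k poly. 0 < degree p \<longrightarrow> (\<exists>x. poly p x = 0))"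

end

theory Submission
  imports Defs "HOL-Algebra.Group"
begin

(* A function in V = Ind_{C6 x Z}^{Q x Z} phi2 is determined by its values at four coset
  representatives g(1, beta, _), beta in F4. In these coordinates Q8 acts by signed permutations
  (its centre by -1), C3 permutes the three nonzero beta cyclically, and the Frobenius acts by
  +-t with t = phi2(g(1,0,0), 1). Averaging a nonzero vector of an invariant subspace over C3 and
  projecting onto the t-eigenline of the Frobenius produces the coordinate vector at beta = 0,
  whose Q8-translates span V; so V is irreducible.

  As f is odd and s^2 = -2, phi1 and phi2 both take the value -1/q on the square of the
  Frobenius, and eta^4 = -q^2 forces phi1 = -1 on the centre. So phi1 and phi2 agree on
  E = {g(1,0,0)} x 2Z, and averaging F |-> sum_y phi2(y)^-1 F(y _) over representatives y of
  E\(C6 x Z) is a homomorphism Ind_C phi1 -> V. It does not vanish on the extension by zero of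
  phi1, hence it is onto by irreducibility. *)

section \<open>Induced representations and characters\<close>

lemma Ind_mul: "F \<in> Ind G mul H \<chi> \<Longrightarrow> h \<in> H \<Longrightarrow> x \<in> G \<Longrightarrow> F (mul h x) = \<chi> h * F x"
  unfolding Ind_def by blast

lemma Ind_outside: "F \<in> Ind G mul H \<chi> \<Longrightarrow> x \<notin> G \<Longrightarrow> F x = 0"
  unfolding Ind_def by blast

lemma Ind_zero: "(\<lambda>_. 0) \<in> Ind G mul H \<chi>"
  unfolding Ind_def by simp

lemma Ind_subspace: "is_subspace (Ind G mul H \<chi>)"
  unfolding is_subspace_def Ind_def by (simp add: algebra_simps)

lemma ract_apply: "x \<in> G \<Longrightarrow> ract G mul g F x = F (mul x g)"
  unfolding ract_def by simp

lemma Ind_eq_on_representatives: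
  assumes "F \<in> Ind G mul H \<chi>" "F' \<in> Ind G mul H \<chi>"
    and reps: "\<And>x. x \<in> G \<Longrightarrow> \<exists>h\<in>H. \<exists>r\<in>R. x = mul h r"
    and "R \<subseteq> G" and "\<And>r. r \<in> R \<Longrightarrow> F r = F' r"
  shows "F = F'"
proof
  fix x show "F x = F' x"
  proof (cases "x \<in> G")
    case True
    with reps obtain h r where "h \<in> H" "r \<in> R" "x = mul h r"
      by blast
    with assms show ?thesis
      by (auto simp: Ind_mul)
  qed (use assms in \<open>simp add: Ind_outside\<close>)
qed

definition invariant_subspace :: "'g set \<Rightarrow> ('g \<Rightarrow> 'g \<Rightarrow> 'g) \<Rightarrow> ('g \<Rightarrow> 'k::field) set \<Rightarrow> bool" where
  "invariant_subspace G mul W \<longleftrightarrow> is_subspace W \<and> (\<forall>g\<in>G. \<forall>F\<in>W. ract G mul g F \<in> W)"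

lemma invariant_subspace_closed:
  assumes "invariant_subspace G mul W"
  shows "F \<in> W \<Longrightarrow> F' \<in> W \<Longrightarrow> (\<lambda>x. F x + F' x) \<in> W"
    and "F \<in> W \<Longrightarrow> (\<lambda>x. c * F x) \<in> W"
    and "g \<in> G \<Longrightarrow> F \<in> W \<Longrightarrow> ract G mul g F \<in> W"
  using assms unfolding invariant_subspace_def is_subspace_def by blast+

lemma irreducible_repI:
  assumes "V \<noteq> {\<lambda>_. 0}"
    and "\<And>W F. invariant_subspace G mul W \<Longrightarrow> W \<subseteq> V \<Longrightarrow> F \<in> W \<Longrightarrow> F \<noteq> (\<lambda>_. 0) \<Longrightarrow> V \<subseteq> W"
  shows "irreducible_rep G mul V"
  unfolding irreducible_rep_def
proof (intro conjI allI impI assms(1))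
  fix W :: "('a \<Rightarrow> 'b) set"
  assume W: "is_subspace W \<and> W \<subseteq> V \<and> (\<forall>g\<in>G. \<forall>F\<in>W. ract G mul g F \<in> W)"
  show "W = {\<lambda>_. 0} \<or> W = V"
  proof (cases "\<exists>F\<in>W. F \<noteq> (\<lambda>_. 0)")
    case True
    then show ?thesis
      using W assms(2)[of W] by (auto simp: invariant_subspace_def)
  next
    case False
    then show ?thesis
      using W by (auto simp: is_subspace_def)
  qed
qed

lemma rep_hom_onto_irreducible:
  assumes irr: "irreducible_rep G mul V2" and hom: "rep_hom G mul V1 V2 \<Psi>"
    and V1: "invariant_subspace G mul V1"
    and nonzero: "F \<in> V1" "\<Psi> F \<noteq> (\<lambda>_. 0)"
  shows "\<Psi> ` V1 = V2"
proof -
  note closed = invariant_subspace_closed[OF V1]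
  have hom_add: "\<Psi> (\<lambda>x. F x + F' x) = (\<lambda>x. \<Psi> F x + \<Psi> F' x)" if "F \<in> V1" "F' \<in> V1" for F F'
    using hom that unfolding rep_hom_def by blast
  have hom_smul: "\<Psi> (\<lambda>x. c * F x) = (\<lambda>x. c * \<Psi> F x)" if "F \<in> V1" for F c
    using hom that unfolding rep_hom_def by blast
  have hom_ract: "\<Psi> (ract G mul g F) = ract G mul g (\<Psi> F)" if "g \<in> G" "F \<in> V1" for g F
    using hom that unfolding rep_hom_def by blast
  have "\<Psi> (\<lambda>x. 0 * F x) = (\<lambda>_. 0)"
    using hom_smul[OF nonzero(1), of 0] by simp
  then have "(\<lambda>_. 0) \<in> \<Psi> ` V1"
    using closed(2)[OF nonzero(1), of 0] by (metis image_eqI)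
  moreover have "(\<lambda>x. \<Psi> F x + \<Psi> F' x) \<in> \<Psi> ` V1" if "F \<in> V1" "F' \<in> V1" for F F'
    by (rule image_eqI[where f = \<Psi>, OF hom_add[OF that, symmetric] closed(1)[OF that]])
  moreover have "(\<lambda>x. c * \<Psi> F x) \<in> \<Psi> ` V1" if "F \<in> V1" for c F
    by (rule image_eqI[where f = \<Psi>, OF hom_smul[OF that, symmetric] closed(2)[OF that]])
  moreover have "ract G mul g (\<Psi> F) \<in> \<Psi> ` V1" if "g \<in> G" "F \<in> V1" for g F
    by (rule image_eqI[where f = \<Psi>, OF hom_ract[OF that, symmetric] closed(3)[OF that]])
  moreover have "\<Psi> ` V1 \<subseteq> V2" and "\<Psi> ` V1 \<noteq> {\<lambda>_. 0}"
    using hom nonzero unfolding rep_hom_def by blast+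
  ultimately have "is_subspace (\<Psi> ` V1)" "\<forall>g\<in>G. \<forall>F\<in>\<Psi> ` V1. ract G mul g F \<in> \<Psi> ` V1"
    unfolding is_subspace_def by blast+
  with irr \<open>\<Psi> ` V1 \<subseteq> V2\<close> \<open>\<Psi> ` V1 \<noteq> {\<lambda>_. 0}\<close> show ?thesis
    unfolding irreducible_rep_def by blast
qed

lemma is_char_mul: "is_char H mul \<chi> \<Longrightarrow> x \<in> H \<Longrightarrow> y \<in> H \<Longrightarrow> \<chi> (mul x y) = \<chi> x * \<chi> y"
  unfolding is_char_def by blast

lemma is_char_nonzero: "is_char H mul \<chi> \<Longrightarrow> x \<in> H \<Longrightarrow> \<chi> x \<noteq> 0"
  unfolding is_char_def by blast

lemma is_char_idempotent: "is_char H mul \<chi> \<Longrightarrow> e \<in> H \<Longrightarrow> mul e e = e \<Longrightarrow> \<chi> e = 1"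
  by (metis is_char_mul is_char_nonzero mult_cancel_left1)

lemma is_char_involution:
  assumes "is_char H mul \<chi>" "inj_on \<chi> H"
    and "e \<in> H" "mul e e = e" "x \<in> H" "mul x x = e" "x \<noteq> e"
  shows "\<chi> x = -1"
proof -
  have "\<chi> e = 1"
    using assms by (simp add: is_char_idempotent)
  then have "\<chi> x * \<chi> x = 1" and "\<chi> x \<noteq> 1"
    using assms is_char_mul[of H mul \<chi> x x] inj_onD[of \<chi> H x e] by auto
  then show ?thesis
    by (metis square_eq_1_iff)
qed

lemma is_char_int_hom:
  assumes \<chi>: "is_char H mul \<chi>" and u: "\<And>i. u i \<in> H" "\<And>i j. u (i + j) = mul (u i) (u j)"
  shows "\<chi> (u j) = \<chi> (u 1) powi j"
proof (induction j rule: int_induct[where k = 0])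
  case base
  show ?case
    using is_char_idempotent[OF \<chi> u(1)] u(2)[of 0 0] by simp
next
  case (step1 i)
  then show ?case
    using is_char_mul[OF \<chi> u(1) u(1)] u(2)[of i 1] is_char_nonzero[OF \<chi> u(1)]
    by (simp add: power_int_add_1)
next
  case (step2 i)
  have "\<chi> (u i) = \<chi> (u (i - 1)) * \<chi> (u 1)"
    using is_char_mul[OF \<chi> u(1) u(1)] u(2)[of "i - 1" 1] by simp
  then show ?case
    using step2 is_char_nonzero[OF \<chi> u(1), of 1] power_int_minus_mult[of "\<chi> (u 1)" i]
    by (metis mult_right_cancel)
qed

context group
begin

lemma subgroup_cancel:
  assumes "subgroup H G" "h \<in> H" "x \<in> carrier G" "h \<otimes> x \<in> H"
  shows "x \<in> H"
proof -
  have "h \<in> carrier G"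
    using assms by (simp add: subgroup.mem_carrier)
  then have "x = inv h \<otimes> (h \<otimes> x)"
    using assms by (simp flip: m_assoc)
  then show ?thesis
    using assms by (metis subgroup.m_closed subgroup.m_inv_closed)
qed

lemma is_char_one: "subgroup H G \<Longrightarrow> is_char H (\<otimes>) \<chi> \<Longrightarrow> \<chi> \<one> = 1"
  by (simp add: is_char_idempotent subgroup.one_closed)

lemma subgroup_range_int_hom:
  fixes u :: "int \<Rightarrow> 'a"
  assumes "\<And>i. u i \<in> carrier G" "\<And>i j. u (i + j) = u i \<otimes> u j"
  shows "subgroup (range u) G"
proof -
  have "u 0 = \<one>"
    using l_cancel_one[of "u 0" "u 0"] assms(1) assms(2)[of 0 0] by simp
  then have "inv (u i) = u (- i)" for i
    using assms(1) by (intro inv_equality) (simp_all flip: assms(2))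
  then show ?thesis
    using assms(1) by (intro subgroupI) (auto simp flip: assms(2))
qed

lemma Ind_invariant_subspace:
  assumes "H \<subseteq> carrier G"
  shows "invariant_subspace (carrier G) (\<otimes>) (Ind (carrier G) (\<otimes>) H \<chi>)"
  unfolding invariant_subspace_def
proof (intro conjI ballI Ind_subspace)
  fix g F assume g: "g \<in> carrier G" and F: "F \<in> Ind (carrier G) (\<otimes>) H \<chi>"
  have "ract (carrier G) (\<otimes>) g F (h \<otimes> x) = \<chi> h * ract (carrier G) (\<otimes>) g F x"
    if "h \<in> H" "x \<in> carrier G" for h x
  proof -
    have "h \<in> carrier G"
      using assms that(1) by blast
    then show ?thesis
      using that g F by (simp add: ract_apply m_assoc Ind_mul)
  qed
  moreover have "ract (carrier G) (\<otimes>) g F x = 0" if "x \<notin> carrier G" for x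
    using that by (simp add: ract_def)
  ultimately show "ract (carrier G) (\<otimes>) g F \<in> Ind (carrier G) (\<otimes>) H \<chi>"
    unfolding Ind_def by blast
qed

lemma char_extension_in_Ind:
  assumes H: "subgroup H G" and \<chi>: "is_char H (\<otimes>) \<chi>"
  shows "(\<lambda>x. if x \<in> H then \<chi> x else 0) \<in> Ind (carrier G) (\<otimes>) H \<chi>"
proof -
  define F where "F = (\<lambda>x. if x \<in> H then \<chi> x else 0)"
  have "F (h \<otimes> x) = \<chi> h * F x" if "h \<in> H" "x \<in> carrier G" for h x
  proof (cases "x \<in> H")
    case True
    then show ?thesis
      using that subgroup.m_closed[OF H] is_char_mul[OF \<chi>] by (simp add: F_def)
  next
    case False
    then have "h \<otimes> x \<notin> H"
      using that subgroup_cancel[OF H] by blast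
    with False show ?thesis
      by (simp add: F_def)
  qed
  moreover have "F x = 0" if "x \<notin> carrier G" for x
    using that subgroup.mem_carrier[OF H] by (auto simp: F_def)
  ultimately show ?thesis
    unfolding Ind_def F_def[symmetric] by blast
qed

end

section \<open>Averaging between induced representations\<close>

definition Ind_average :: "('g, 'm) monoid_scheme \<Rightarrow> 'g set \<Rightarrow> ('g \<Rightarrow> 'k::field) \<Rightarrow> ('g \<Rightarrow> 'k) \<Rightarrow> 'g \<Rightarrow> 'k"
  where "Ind_average G S \<chi> F =
    (\<lambda>x. if x \<in> carrier G then \<Sum>y\<in>S. inverse (\<chi> y) * F (y \<otimes>\<^bsub>G\<^esub> x) else 0)"

locale Ind_averaging = group G for G (structure) +
  fixes H1 H2 E S :: "'a set" and \<chi>1 \<chi>2 :: "'a \<Rightarrow> 'k::field"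
  assumes subgroup_H1: "subgroup H1 G" and subgroup_H2: "subgroup H2 G"
    and subgroup_E: "subgroup E G" and E_subset: "E \<subseteq> H1 \<inter> H2"
    and char1: "is_char H1 (\<otimes>) \<chi>1" and char2: "is_char H2 (\<otimes>) \<chi>2"
    and chars_agree: "\<And>k. k \<in> E \<Longrightarrow> \<chi>1 k = \<chi>2 k"
    and finite_S: "finite S" and S_subset: "S \<subseteq> H2"
    and representatives: "\<And>h. h \<in> H2 \<Longrightarrow> \<exists>k\<in>E. \<exists>s\<in>S. h = k \<otimes> s"
    and representatives_unique:
      "\<And>k k' s s'. \<lbrakk>k \<in> E; k' \<in> E; s \<in> S; s' \<in> S; k \<otimes> s = k' \<otimes> s'\<rbrakk> \<Longrightarrow> s = s'"
begin

lemma S_carrier: "y \<in> S \<Longrightarrow> y \<in> carrier G"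
  using S_subset subgroup.mem_carrier[OF subgroup_H2] by blast

lemma representatives_permutation:
  assumes h: "h \<in> H2"
  obtains k p where "bij_betw p S S" "\<And>y. y \<in> S \<Longrightarrow> k y \<in> E \<and> y \<otimes> h = k y \<otimes> p y"
proof -
  have "\<forall>y\<in>S. \<exists>k\<in>E. \<exists>s\<in>S. y \<otimes> h = k \<otimes> s"
    using representatives subgroup.m_closed[OF subgroup_H2] S_subset h by blast
  then obtain k p where kp: "\<And>y. y \<in> S \<Longrightarrow> k y \<in> E \<and> p y \<in> S \<and> y \<otimes> h = k y \<otimes> p y"
    by metis
  have E_carrier: "x \<in> E \<Longrightarrow> x \<in> carrier G" for x
    using subgroup.mem_carrier[OF subgroup_E] by blast
  have hG: "h \<in> carrier G"
    using h subgroup.mem_carrier[OF subgroup_H2] by blast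
  have "inj_on p S"
  proof (rule inj_onI)
    fix y y' assume y: "y \<in> S" "y' \<in> S" and "p y = p y'"
    have "p y = inv (k y) \<otimes> (y \<otimes> h)" if "y \<in> S" for y
      using kp[OF that] E_carrier S_carrier that hG by (simp add: inv_solve_left)
    then have "inv (k y) \<otimes> (y \<otimes> h) = inv (k y') \<otimes> (y' \<otimes> h)"
      using y \<open>p y = p y'\<close> by metis
    then have "(inv (k y) \<otimes> y) \<otimes> h = (inv (k y') \<otimes> y') \<otimes> h"
      using y kp E_carrier S_carrier hG by (simp add: m_assoc)
    then have "inv (k y) \<otimes> y = inv (k y') \<otimes> y'"
      using y kp E_carrier S_carrier hG by simp
    then show "y = y'"
      using representatives_unique y kp subgroup.m_inv_closed[OF subgroup_E] by blast
  qed
  then have "bij_betw p S S"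
    using endo_inj_surj[OF finite_S] kp by (simp add: bij_betw_def image_subset_iff)
  with kp show thesis
    using that by blast
qed

lemma Ind_average_in_Ind:
  assumes F: "F \<in> Ind (carrier G) (\<otimes>) H1 \<chi>1"
  shows "Ind_average G S \<chi>2 F \<in> Ind (carrier G) (\<otimes>) H2 \<chi>2"
proof -
  let ?\<Psi> = "Ind_average G S \<chi>2 F"
  have "?\<Psi> (h \<otimes> x) = \<chi>2 h * ?\<Psi> x" if h: "h \<in> H2" and x: "x \<in> carrier G" for h x
  proof -
    obtain k p where p: "bij_betw p S S" and kp: "\<And>y. y \<in> S \<Longrightarrow> k y \<in> E \<and> y \<otimes> h = k y \<otimes> p y"
      using representatives_permutation[OF h] by blast
    let ?g = "\<lambda>s. inverse (\<chi>2 s) * F (s \<otimes> x)"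
    have hG: "h \<in> carrier G"
      using h subgroup.mem_carrier[OF subgroup_H2] by blast
    have summand: "inverse (\<chi>2 y) * F (y \<otimes> (h \<otimes> x)) = \<chi>2 h * ?g (p y)" if y: "y \<in> S" for y
    proof -
      have kE: "k y \<in> H1" "k y \<in> H2" "k y \<in> carrier G" and pS: "p y \<in> S" "p y \<in> H2"
        using kp[OF y] E_subset subgroup.mem_carrier[OF subgroup_E] p y S_subset
        by (auto simp: bij_betw_def)
      have "F (y \<otimes> (h \<otimes> x)) = F (k y \<otimes> (p y \<otimes> x))"
        using kp[OF y] y hG x kE pS S_carrier by (simp flip: m_assoc)
      also have "\<dots> = \<chi>2 (k y) * F (p y \<otimes> x)"
        using Ind_mul[OF F kE(1)] chars_agree kp[OF y] x pS S_carrier by simp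
      finally have "F (y \<otimes> (h \<otimes> x)) = \<chi>2 (k y) * F (p y \<otimes> x)" .
      moreover have "\<chi>2 y * \<chi>2 h = \<chi>2 (k y) * \<chi>2 (p y)"
        using is_char_mul[OF char2] kp[OF y] y h kE pS S_subset by (metis subsetD)
      moreover have "\<chi>2 y \<noteq> 0" "\<chi>2 (p y) \<noteq> 0"
        using is_char_nonzero[OF char2] y pS S_subset by auto
      ultimately show ?thesis
        by (simp add: field_simps)
    qed
    have "?\<Psi> (h \<otimes> x) = (\<Sum>y\<in>S. \<chi>2 h * ?g (p y))"
      using hG x summand by (simp add: Ind_average_def)
    also have "\<dots> = \<chi>2 h * (\<Sum>y\<in>S. ?g (p y))"
      by (simp add: sum_distrib_left)
    also have "\<dots> = \<chi>2 h * (\<Sum>s\<in>S. ?g s)"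
      using sum.reindex_bij_betw[OF p, of ?g] by simp
    also have "\<dots> = \<chi>2 h * ?\<Psi> x"
      using x by (simp add: Ind_average_def)
    finally show ?thesis .
  qed
  moreover have "?\<Psi> x = 0" if "x \<notin> carrier G" for x
    using that by (simp add: Ind_average_def)
  ultimately show ?thesis
    unfolding Ind_def by blast
qed

lemma Ind_average_ract:
  assumes "g \<in> carrier G"
  shows "Ind_average G S \<chi>2 (ract (carrier G) (\<otimes>) g F) =
    ract (carrier G) (\<otimes>) g (Ind_average G S \<chi>2 F)"
  using assms S_carrier by (auto simp: fun_eq_iff Ind_average_def ract_def m_assoc intro!: sum.cong)

lemma Ind_average_rep_hom:
  "rep_hom (carrier G) (\<otimes>) (Ind (carrier G) (\<otimes>) H1 \<chi>1) (Ind (carrier G) (\<otimes>) H2 \<chi>2) (Ind_average G S \<chi>2)"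
  unfolding rep_hom_def
  by (auto simp: Ind_average_in_Ind Ind_average_ract)
    (auto simp: Ind_average_def fun_eq_iff sum.distrib sum_distrib_left algebra_simps)

lemma Ind_average_char_extension_one:
  "Ind_average G S \<chi>2 (\<lambda>x. if x \<in> H1 then \<chi>1 x else 0) \<one> = (\<Sum>y\<in>S \<inter> H1. \<chi>1 y / \<chi>2 y)"
  using S_carrier by (simp add: Ind_average_def sum.inter_restrict[OF finite_S] field_simps
      if_distrib cong: if_cong)

end

section \<open>The field with four elements\<close>

lemma F4_all: "(\<forall>x. P x) \<longleftrightarrow> P F0 \<and> P F1 \<and> P Zt \<and> P Zt2"
  by (metis F4.exhaust)

instantiation F4 :: field
begin
definition zero_F4_def: "0 = F0"
definition one_F4_def: "1 = F1"
definition plus_F4_def: "x + (y::F4) = f4add x y"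
definition times_F4_def: "x * (y::F4) = f4mul x y"
definition uminus_F4_def: "- x = (x::F4)"
definition minus_F4_def: "x - (y::F4) = f4add x y"
definition inverse_F4_def: "inverse (x::F4) = f4mul x x" \<comment> \<open>\<open>x\<^sup>3 = 1\<close> for \<open>x \<noteq> 0\<close>\<close>
definition divide_F4_def: "divide x (y::F4) = f4mul x (f4mul y y)"

lemmas F4_ops = zero_F4_def one_F4_def plus_F4_def times_F4_def uminus_F4_def minus_F4_def
  inverse_F4_def divide_F4_def

instance
  by standard ((atomize (full))?, simp add: F4_all F4_ops)+
end

instance F4 :: finite
proof
  have "UNIV = {F0, F1, Zt, Zt2}"
    by (auto intro: F4.exhaust)
  then show "finite (UNIV :: F4 set)"
    by (metis finite.emptyI finite_insert)
qed

lemma F4_cases: "(x::F4) = 0 \<or> x = 1 \<or> x = Zt \<or> x = Zt2"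
  by (cases x) (simp_all add: F4_ops)

lemma F4_table [simp]:
  "Zt * Zt = Zt2" "Zt * Zt2 = 1" "Zt2 * Zt = 1" "Zt2 * Zt2 = Zt"
  "1 + Zt = Zt2" "Zt + 1 = Zt2" "1 + Zt2 = Zt" "Zt2 + 1 = Zt" "Zt + Zt2 = 1" "Zt2 + Zt = 1"
  "Zt \<noteq> 0" "Zt2 \<noteq> 0" "Zt \<noteq> 1" "Zt2 \<noteq> 1" "Zt \<noteq> Zt2"
  "0 \<noteq> Zt" "0 \<noteq> Zt2" "1 \<noteq> Zt" "1 \<noteq> Zt2" "Zt2 \<noteq> Zt"
  by (simp_all add: F4_ops)

lemma F4_defs_eq: "f4add x y = x + y" "f4mul x y = x * y" "F0 = 0" "F1 = 1"
  by (simp_all add: F4_ops)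

lemma F4_add_self [simp]: "(x::F4) + x = 0"
  by (cases x) (simp_all add: F4_ops)

lemma F4_add_self_left [simp]: "(x::F4) + (x + y) = y"
  by (simp flip: add.assoc)

lemma F4_two [simp]: "(2::F4) = 0"
  by (metis F4_add_self one_add_one)

lemma F4_pow4: "(x::F4) * x * x * x = x"
  using F4_cases[of x] by auto

lemma F4_square_add: "((x::F4) + y) * (x + y) = x * x + y * y"
  by (simp add: algebra_simps)

section \<open>The group \<open>QZ\<close> for odd \<open>f\<close>\<close>

definition twist :: "int \<Rightarrow> F4 \<Rightarrow> F4" where
  "twist r x = (if even r then x else x * x)"

lemma frob_frob: "frob (frob x) = x"
  using F4_pow4[of x] by (simp add: frob_def mult.assoc flip: times_F4_def)

lemma funpow_frob: "frob ^^ n = (if even n then id else frob)"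
  by (induction n) (auto simp: frob_frob)

lemma tw_odd: assumes "odd f" shows "tw f r = twist r"
proof -
  have inv_frob: "inv_into UNIV frob = frob"
    by (metis frob_frob inv_equality)
  have "odd (f * nat r) \<longleftrightarrow> 0 \<le> r \<and> odd r"
    using assms by (cases "0 \<le> r") (auto simp: even_nat_iff)
  moreover have "odd (f * nat (- r)) \<longleftrightarrow> r \<le> 0 \<and> odd r"
    using assms by (cases "r \<le> 0") (auto simp: even_nat_iff)
  ultimately show ?thesis
    by (auto simp: fun_eq_iff tw_def twist_def funpow_frob inv_frob frob_def times_F4_def
        simp del: even_mult_iff split: if_splits)
qed

lemma twist_mult: "twist r (x * y) = twist r x * twist r y"
  by (simp add: twist_def algebra_simps)

lemma twist_add: "twist r (x + y) = twist r x + twist r y"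
  by (simp add: twist_def algebra_simps)

lemma twist_simps [simp]:
  "twist r 0 = 0" "twist r 1 = 1" "even r \<Longrightarrow> twist r x = x"
  "twist r Zt = (if even r then Zt else Zt2)" "twist r Zt2 = (if even r then Zt2 else Zt)"
  by (simp_all add: twist_def)

lemma twist_twist: "twist r (twist m x) = twist (r + m) x"
  using F4_pow4[of x] by (auto simp: twist_def mult.assoc)

lemma twist_eq_0_iff [simp]: "twist r x = 0 \<longleftrightarrow> x = 0"
  by (simp add: twist_def)

lemma mmul_field:
  "mmul A B = (\<lambda>i j. if i < 3 \<and> j < 3 then A i 0 * B 0 j + A i 1 * B 1 j + A i 2 * B 2 j else 0)"
  unfolding mmul_def F4_defs_eq ..

lemma mmul_assoc: "mmul A (mmul B C) = mmul (mmul A B) C"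
  by (intro ext) (simp add: mmul_field, algebra)

lemma twmat_odd: "odd f \<Longrightarrow> twmat f r A = (\<lambda>i j. twist r (A i j))"
  by (simp add: twmat_def tw_odd)

lemma twmat_mmul: "odd f \<Longrightarrow> twmat f r (mmul A B) = mmul (twmat f r A) (twmat f r B)"
  by (simp add: fun_eq_iff twmat_odd mmul_field twist_add twist_mult)

lemma twmat_twmat: "odd f \<Longrightarrow> twmat f r (twmat f m A) = twmat f (r + m) A"
  by (simp add: twmat_odd twist_twist)

lemma gmat_field: "gmat a b c = (\<lambda>i j.
     if i = 0 \<and> j = 0 then a else if i = 0 \<and> j = 1 then b else if i = 0 \<and> j = 2 then c
     else if i = 1 \<and> j = 1 then a * a else if i = 1 \<and> j = 2 then b * b
     else if i = 2 \<and> j = 2 then a else 0)"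
  unfolding gmat_def F4_defs_eq ..

lemma gmat_00 [simp]: "gmat a b c 0 0 = a"
  by (simp add: gmat_def)

lemma gmat_eq_iff [simp]: "gmat a b c = gmat a' b' c' \<longleftrightarrow> a = a' \<and> b = b' \<and> c = c'"
proof
  assume "gmat a b c = gmat a' b' c'"
  then have "gmat a b c 0 j = gmat a' b' c' 0 j" for j
    by simp
  from this[of 0] this[of 1] this[of 2] show "a = a' \<and> b = b' \<and> c = c'"
    by (simp add: gmat_def)
qed simp

lemma twmat_gmat: "odd f \<Longrightarrow> twmat f r (gmat a b c) = gmat (twist r a) (twist r b) (twist r c)"
  by (simp add: fun_eq_iff twmat_odd gmat_field twist_mult)

lemma gmat_mul:
  "mmul (gmat a b c) (gmat a' b' c') =
    gmat (a * a') (a * b' + b * a' * a') (a * c' + b * b' * b' + c * a')"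
proof (intro ext)
  fix i j :: nat
  have "b * b * (a' * a' * a' * a') = b * b * a'"
    by (simp add: F4_pow4)
  then show "mmul (gmat a b c) (gmat a' b' c') i j
      = gmat (a * a') (a * b' + b * a' * a') (a * c' + b * b' * b' + c * a') i j"
    by (cases "i = 0"; cases "i = 1"; cases "i = 2"; cases "j = 0"; cases "j = 1"; cases "j = 2")
      (simp_all add: mmul_field gmat_field F4_square_add algebra_simps)
qed

lemma gmul_gmat:
  assumes "odd f"
  shows "gmul f (gmat a b c, n) (gmat a' b' c', m) =
    (gmat (a * twist n a') (a * twist n b' + b * twist n a' * twist n a')
      (a * twist n c' + b * twist n b' * twist n b' + c * twist n a'), n + m)"
  by (simp add: gmul_def twmat_gmat[OF assms] gmat_mul)

lemma gmul_assoc: "odd f \<Longrightarrow> gmul f (gmul f x y) z = gmul f x (gmul f y z)"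
  by (simp add: gmul_def twmat_mmul twmat_twmat mmul_assoc add.assoc)

lemma Qcond_field: "Qcond a b c \<longleftrightarrow> a \<noteq> 0 \<and> a * (c * c) + a * a * c = b * (b * b)"
  by (simp add: Qcond_def F4_defs_eq)

lemma Qcond_mul:
  assumes "Qcond a b c" and "Qcond a' b' c'"
  shows "Qcond (a * a') (a * b' + b * a' * a') (a * c' + b * b' * b' + c * a')"
proof -
  have h: "a * (c * c) + a * a * c = b * (b * b)" and h': "a' * (c' * c') + a' * a' * c' = b' * (b' * b')"
    and nz: "a * a' \<noteq> 0"
    using assms by (auto simp: Qcond_field)
  have p1: "b' * b' * b' * b' = b'" and p2: "a' * a' * a' * a' = a'"
    by (rule F4_pow4)+
  let ?b = "a * b' + b * a' * a'" and ?c = "a * c' + b * b' * b' + c * a'"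
  have c2: "?c * ?c = a * a * (c' * c') + b * b * b' + c * c * (a' * a')"
    using p1 by (simp add: F4_square_add algebra_simps)
  have "?b * (?b * ?b) = ?b * (a * a * (b' * b') + b * b * (a' * a' * a' * a'))"
    by (simp add: F4_square_add algebra_simps)
  also have "\<dots> = ?b * (a * a * (b' * b') + b * b * a')"
    using p2 by simp
  also have "\<dots> = a * a * a * (b' * b' * b') + a * a * (a' * a') * b * (b' * b')
      + a * a' * (b * b) * b' + b * b * b * (a' * a' * a')"
    using p2 by (simp add: algebra_simps)
  finally have b3: "?b * (?b * ?b) = \<dots>" .
  have "a * a' * (?c * ?c) + a * a' * (a * a') * ?c = ?b * (?b * ?b)"
    unfolding c2 b3 using h h' p2 by algebra
  then show ?thesis
    using nz by (simp add: Qcond_field)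
qed

lemma Qcond_twist: "Qcond a b c \<Longrightarrow> Qcond (twist r a) (twist r b) (twist r c)"
  unfolding Qcond_field by (metis twist_eq_0_iff twist_add twist_mult)

lemma QZ_gmat [simp]: "(gmat a b c, n) \<in> QZ \<longleftrightarrow> Qcond a b c"
  unfolding QZ_def Qgrp_def by auto

lemma QZ_iff: "x \<in> QZ \<longleftrightarrow> (\<exists>a b c n. x = (gmat a b c, n) \<and> Qcond a b c)"
  unfolding QZ_def Qgrp_def by (cases x) auto

lemma gmul_closed: "odd f \<Longrightarrow> x \<in> QZ \<Longrightarrow> y \<in> QZ \<Longrightarrow> gmul f x y \<in> QZ"
  unfolding QZ_iff by (auto simp: gmul_gmat Qcond_mul Qcond_twist)

lemma gmul_one_left: "odd f \<Longrightarrow> x \<in> QZ \<Longrightarrow> gmul f (gmat 1 0 0, 0) x = x"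
  unfolding QZ_iff by (auto simp: gmul_gmat)

definition QZ_inverse :: "F4 \<Rightarrow> F4 \<Rightarrow> F4 \<Rightarrow> int \<Rightarrow> elt" where
  "QZ_inverse a b c n =
    (gmat (twist (- n) (a * a)) (twist (- n) b) (twist (- n) (a * a * (b * b * b) + c * a)), - n)"

lemma QZ_inverse_in_QZ: "Qcond a b c \<Longrightarrow> QZ_inverse a b c n \<in> QZ"
  unfolding QZ_inverse_def QZ_gmat
  by (intro Qcond_twist) (cases a; cases b; cases c; simp add: Qcond_def F4_ops)

lemma gmul_QZ_inverse:
  assumes "odd f" and "Qcond a b c"
  shows "gmul f (QZ_inverse a b c n) (gmat a b c, n) = (gmat 1 0 0, 0)"
proof -
  have "a * a * a = 1" "a * a * b + b * a * a = 0"
    "a * a * c + b * b * b + (a * a * (b * b * b) + c * a) * a = 0"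
    using assms(2) by (cases a; cases b; cases c; simp add: Qcond_def F4_ops)+
  then show ?thesis
    unfolding QZ_inverse_def gmul_gmat[OF assms(1)]
    by (simp add: twist_twist flip: twist_mult twist_add)
qed

definition QZ_group :: "nat \<Rightarrow> elt monoid" where
  "QZ_group f = \<lparr>carrier = QZ, mult = gmul f, one = (gmat 1 0 0, 0)\<rparr>"

lemma QZ_group_simps [simp]:
  "carrier (QZ_group f) = QZ" "mult (QZ_group f) = gmul f" "one (QZ_group f) = (gmat 1 0 0, 0)"
  by (simp_all add: QZ_group_def)

lemma group_QZ_group: assumes "odd f" shows "group (QZ_group f)"
proof (rule groupI)
  fix x assume "x \<in> carrier (QZ_group f)"
  then obtain a b c n where "x = (gmat a b c, n)" "Qcond a b c"
    by (auto simp: QZ_iff)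
  then show "\<exists>y\<in>carrier (QZ_group f). y \<otimes>\<^bsub>QZ_group f\<^esub> x = \<one>\<^bsub>QZ_group f\<^esub>"
    using QZ_inverse_in_QZ gmul_QZ_inverse[OF assms] by (intro bexI[of _ "QZ_inverse a b c n"]) auto
qed (simp_all add: assms gmul_closed gmul_assoc gmul_one_left Qcond_field)

lemma QZ_group_inv:
  assumes "odd f" and "Qcond a b c"
  shows "inv\<^bsub>QZ_group f\<^esub> (gmat a b c, n) = QZ_inverse a b c n"
  by (rule group.inv_equality[OF group_QZ_group]) (simp_all add: assms gmul_QZ_inverse QZ_inverse_in_QZ)

section \<open>The subgroups \<open>C6Z\<close> and \<open>Csub\<close>\<close>

lemma C6_eq: "C6 = {gmat a 0 c | a c. a \<noteq> 0 \<and> (c = 0 \<or> c = a)}"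
proof -
  have m: "mmul (gmat 1 0 c0) (gmat a 0 0) = gmat a 0 (c0 * a)" for c0 a :: F4
    by (simp add: gmat_mul)
  show ?thesis
  proof (rule equalityI; rule subsetI)
    fix x assume "x \<in> C6"
    then show "x \<in> {gmat a 0 c | a c. a \<noteq> 0 \<and> (c = 0 \<or> c = a)}"
      unfolding C6_def Zc_def C3_def F4_defs_eq using m by auto
  next
    fix x assume "x \<in> {gmat a 0 c | a c. a \<noteq> 0 \<and> (c = 0 \<or> c = a)}"
    then obtain a c where x: "x = gmat a 0 c" "a \<noteq> 0" "c = 0 \<or> c = a"
      by blast
    then have "x = mmul (gmat 1 0 (if c = 0 then 0 else 1)) (gmat a 0 0)"
      using m by auto
    then show "x \<in> C6"
      unfolding C6_def Zc_def C3_def F4_defs_eq using x by auto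
  qed
qed

lemma C6Z_gmat [simp]: "(gmat a b c, n) \<in> C6Z \<longleftrightarrow> a \<noteq> 0 \<and> b = 0 \<and> (c = 0 \<or> c = a)"
  by (auto simp: C6Z_def C6_eq)

lemma C6Z_iff: "x \<in> C6Z \<longleftrightarrow> (\<exists>a c n. x = (gmat a 0 c, n) \<and> a \<noteq> 0 \<and> (c = 0 \<or> c = a))"
  by (cases x) (auto simp: C6Z_def C6_eq)

lemma subgroup_C6Z: assumes "odd f" shows "subgroup C6Z (QZ_group f)"
proof (rule group.subgroupI[OF group_QZ_group[OF assms]]; (simp only: QZ_group_simps)?)
  show "C6Z \<subseteq> QZ"
    by (auto simp: C6Z_iff Qcond_field)
  have "(gmat 1 0 0, 0) \<in> C6Z"
    by simp
  then show "C6Z \<noteq> {}"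
    by blast
  fix x y assume "x \<in> C6Z" "y \<in> C6Z"
  then show "inv\<^bsub>QZ_group f\<^esub> x \<in> C6Z" "gmul f x y \<in> C6Z"
    by (auto simp: C6Z_iff QZ_group_inv[OF assms] QZ_inverse_def gmul_gmat[OF assms] Qcond_field)
qed

lemma C4_eq:
  assumes "z \<noteq> F0" "z \<noteq> F1"
  shows "C4 z = {gmat 1 0 0, gmat 1 0 1, gmat 1 1 Zt, gmat 1 1 Zt2}" (is "_ = ?S")
proof
  have z: "z = Zt \<or> z = Zt2"
    using assms by (cases z) auto
  let ?g = "\<lambda>A. mmul (gmat 1 1 z) A"
  have "(?g ^^ n) (gmat 1 0 0) \<in> ?S" for n
    using z by (induction n) (auto simp: gmat_mul)
  then show "C4 z \<subseteq> ?S"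
    unfolding C4_def F4_defs_eq by blast
  have "(?g ^^ n) (gmat 1 0 0) \<in> C4 z" for n
    unfolding C4_def F4_defs_eq by blast
  from this[of 0] this[of 1] this[of 2] this[of 3] show "?S \<subseteq> C4 z"
    using z by (auto simp: gmat_mul numeral_3_eq_3 numeral_2_eq_2)
qed

definition F2 :: "F4 set" where "F2 = {0, 1}"

lemma F2_simps [simp]: "0 \<in> F2" "1 \<in> F2" "Zt \<notin> F2" "Zt2 \<notin> F2"
  by (simp_all add: F2_def)

lemma F2_add_iff: "x + y \<in> F2 \<longleftrightarrow> (x \<in> F2 \<longleftrightarrow> y \<in> F2)"
  by (cases x; cases y) (simp_all add: F2_def F4_ops)

lemma F2_twist_iff [simp]: "twist r x \<in> F2 \<longleftrightarrow> x \<in> F2"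
  by (cases x) (simp_all add: F2_def twist_def F4_ops)

lemma Csub_gmat [simp]:
  assumes "z \<noteq> F0" "z \<noteq> F1"
  shows "(gmat a b c, n) \<in> Csub z \<longleftrightarrow> a = 1 \<and> Qcond 1 b c \<and> (even n \<longleftrightarrow> b \<in> F2)"
proof -
  have "gmat 1 b c \<in> C4 z \<longleftrightarrow> Qcond 1 b c \<and> b \<in> F2"
    unfolding C4_eq[OF assms] Qcond_field F2_def by (cases b; cases c) (simp_all add: F4_ops)
  moreover have "gmat a b c \<in> Q8 \<longleftrightarrow> a = 1 \<and> Qcond 1 b c"
    unfolding Q8_def Qgrp_def by (auto simp: F4_defs_eq)
  ultimately show ?thesis
    unfolding Csub_def by auto
qed

lemma Csub_iff:
  assumes "z \<noteq> F0" "z \<noteq> F1"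
  shows "x \<in> Csub z \<longleftrightarrow> (\<exists>b c n. x = (gmat 1 b c, n) \<and> Qcond 1 b c \<and> (even n \<longleftrightarrow> b \<in> F2))"
proof -
  have "x \<in> Csub z \<Longrightarrow> x \<in> QZ"
    by (auto simp: Csub_def Q8_def QZ_def)
  then show ?thesis
    using assms by (auto simp: QZ_iff)
qed

lemma subgroup_Csub:
  assumes "odd f" "z \<noteq> F0" "z \<noteq> F1"
  shows "subgroup (Csub z) (QZ_group f)"
proof (rule group.subgroupI[OF group_QZ_group[OF assms(1)]]; (simp only: QZ_group_simps)?)
  show "Csub z \<subseteq> QZ"
    using assms by (auto simp: Csub_iff QZ_iff Qcond_field)
  have "(gmat 1 0 0, 0) \<in> Csub z"
    using assms by (simp add: Qcond_field)
  then show "Csub z \<noteq> {}"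
    by blast
  fix x y assume "x \<in> Csub z" "y \<in> Csub z"
  then obtain b c n b' c' m where x: "x = (gmat 1 b c, n)" "Qcond 1 b c" "even n \<longleftrightarrow> b \<in> F2"
    and y: "y = (gmat 1 b' c', m)" "Qcond 1 b' c'" "even m \<longleftrightarrow> b' \<in> F2"
    unfolding Csub_iff[OF assms(2,3)] by blast
  have "gmul f x y \<in> QZ"
    using x y gmul_closed[OF assms(1)] by simp
  then show "gmul f x y \<in> Csub z"
    using x y by (simp add: assms gmul_gmat F2_add_iff) blast
  have "QZ_inverse 1 b c n \<in> QZ"
    using x QZ_inverse_in_QZ by blast
  then show "inv\<^bsub>QZ_group f\<^esub> x \<in> Csub z"
    using x by (simp add: assms QZ_group_inv QZ_inverse_def)
qed

section \<open>Irreducibility of \<open>Ind QZ (gmul f) C6Z \<phi>2\<close>\<close>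

definition coset_rep :: "F4 \<Rightarrow> elt" where
  "coset_rep \<beta> = (gmat 1 \<beta> (if \<beta> = 0 then 0 else Zt), 0)"

lemma coset_rep_QZ: "coset_rep \<beta> \<in> QZ"
  unfolding coset_rep_def QZ_gmat Qcond_field by (cases \<beta>) (simp_all add: F4_ops)

lemma QZ_decomposition:
  assumes "odd f" and "x \<in> QZ"
  shows "\<exists>h\<in>C6Z. \<exists>\<beta>. x = gmul f h (coset_rep \<beta>)"
proof -
  obtain a b c n where x: "x = (gmat a b c, n)" "Qcond a b c"
    using assms(2) by (auto simp: QZ_iff)
  have a: "a \<noteq> 0"
    using x(2) by (simp add: Qcond_field)
  define \<beta> where "\<beta> = twist n (b * inverse a)"
  define c' where "c' = c + a * twist n (if b = 0 then 0 else Zt)"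
  have "c' = 0 \<or> c' = a"
    using x(2) unfolding c'_def Qcond_field twist_def
    by (cases "even n"; cases a; cases b; cases c) (simp_all add: F4_ops)
  then have "(gmat a 0 c', n) \<in> C6Z"
    using a by simp
  moreover have "twist n \<beta> = b * inverse a" "\<beta> = 0 \<longleftrightarrow> b = 0"
    using a by (simp_all add: \<beta>_def twist_twist)
  then have "gmul f (gmat a 0 c', n) (coset_rep \<beta>) = x"
    using a by (simp add: coset_rep_def gmul_gmat[OF assms(1)] c'_def x)
  ultimately show ?thesis
    by metis
qed

lemma coset_rep_mul_table:
  assumes "odd f"
  shows
  "gmul f (coset_rep 0) (gmat 1 1 Zt, 0) = gmul f (gmat 1 0 0, 0) (coset_rep 1)"
  "gmul f (coset_rep 1) (gmat 1 1 Zt, 0) = gmul f (gmat 1 0 1, 0) (coset_rep 0)"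
  "gmul f (coset_rep Zt) (gmat 1 1 Zt, 0) = gmul f (gmat 1 0 0, 0) (coset_rep Zt2)"
  "gmul f (coset_rep Zt2) (gmat 1 1 Zt, 0) = gmul f (gmat 1 0 1, 0) (coset_rep Zt)"
  "gmul f (coset_rep 0) (gmat 1 Zt Zt, 0) = gmul f (gmat 1 0 0, 0) (coset_rep Zt)"
  "gmul f (coset_rep 1) (gmat 1 Zt Zt, 0) = gmul f (gmat 1 0 1, 0) (coset_rep Zt2)"
  "gmul f (coset_rep Zt) (gmat 1 Zt Zt, 0) = gmul f (gmat 1 0 1, 0) (coset_rep 0)"
  "gmul f (coset_rep Zt2) (gmat 1 Zt Zt, 0) = gmul f (gmat 1 0 0, 0) (coset_rep 1)"
  "gmul f (coset_rep 0) (gmat 1 Zt2 Zt, 0) = gmul f (gmat 1 0 0, 0) (coset_rep Zt2)"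
  "gmul f (coset_rep 1) (gmat 1 Zt2 Zt, 0) = gmul f (gmat 1 0 0, 0) (coset_rep Zt)"
  "gmul f (coset_rep Zt) (gmat 1 Zt2 Zt, 0) = gmul f (gmat 1 0 1, 0) (coset_rep 1)"
  "gmul f (coset_rep Zt2) (gmat 1 Zt2 Zt, 0) = gmul f (gmat 1 0 1, 0) (coset_rep 0)"
  "gmul f (coset_rep 0) (gmat Zt 0 0, 0) = gmul f (gmat Zt 0 0, 0) (coset_rep 0)"
  "gmul f (coset_rep 1) (gmat Zt 0 0, 0) = gmul f (gmat Zt 0 0, 0) (coset_rep Zt)"
  "gmul f (coset_rep Zt) (gmat Zt 0 0, 0) = gmul f (gmat Zt 0 0, 0) (coset_rep Zt2)"
  "gmul f (coset_rep Zt2) (gmat Zt 0 0, 0) = gmul f (gmat Zt 0 0, 0) (coset_rep 1)"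
  "gmul f (coset_rep 0) (gmat 1 0 0, 1) = gmul f (gmat 1 0 0, 1) (coset_rep 0)"
  "gmul f (coset_rep 1) (gmat 1 0 0, 1) = gmul f (gmat 1 0 1, 1) (coset_rep 1)"
  "gmul f (coset_rep Zt) (gmat 1 0 0, 1) = gmul f (gmat 1 0 1, 1) (coset_rep Zt2)"
  "gmul f (coset_rep Zt2) (gmat 1 0 0, 1) = gmul f (gmat 1 0 1, 1) (coset_rep Zt)"
  unfolding coset_rep_def by (simp_all add: gmul_gmat[OF assms] twist_def)

locale C6Z_character =
  fixes f :: nat and \<phi>2 :: "elt \<Rightarrow> 'k::field_char_0"
  assumes odd_f: "odd f" and char2: "is_char C6Z (gmul f) \<phi>2"
    and center: "\<phi>2 (gmat 1 0 1, 0) = -1" and C3_trivial: "\<phi>2 (gmat Zt 0 0, 0) = 1"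
begin

abbreviation "V \<equiv> Ind QZ (gmul f) C6Z \<phi>2"
abbreviation "t \<equiv> \<phi>2 (gmat 1 0 0, 1)"

lemma C6Z_char_values: "\<phi>2 (gmat 1 0 0, 0) = 1" "\<phi>2 (gmat 1 0 1, 1) = - t" "t \<noteq> 0"
proof -
  show one: "\<phi>2 (gmat 1 0 0, 0) = 1"
    by (rule is_char_idempotent[OF char2]) (simp_all add: gmul_gmat[OF odd_f])
  have "gmul f (gmat 1 0 1, 0) (gmat 1 0 0, 1) = (gmat 1 0 1, 1)"
    by (simp add: gmul_gmat[OF odd_f])
  then show "\<phi>2 (gmat 1 0 1, 1) = - t"
    using is_char_mul[OF char2, of "(gmat 1 0 1, 0)" "(gmat 1 0 0, 1)"] center by simp
  show "t \<noteq> 0"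
    by (rule is_char_nonzero[OF char2]) simp
qed

lemma V_eqI:
  assumes "F \<in> V" "F' \<in> V" "\<And>\<beta>. F (coset_rep \<beta>) = F' (coset_rep \<beta>)"
  shows "F = F'"
  using assms QZ_decomposition[OF odd_f] coset_rep_QZ
  by (intro Ind_eq_on_representatives[where R = "range coset_rep"]) auto

lemma ract_coset_rep:
  assumes "F \<in> V"
  shows
  "ract QZ (gmul f) (gmat 1 1 Zt, 0) F (coset_rep 0) = F (coset_rep 1)"
  "ract QZ (gmul f) (gmat 1 1 Zt, 0) F (coset_rep 1) = - F (coset_rep 0)"
  "ract QZ (gmul f) (gmat 1 1 Zt, 0) F (coset_rep Zt) = F (coset_rep Zt2)"
  "ract QZ (gmul f) (gmat 1 1 Zt, 0) F (coset_rep Zt2) = - F (coset_rep Zt)"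
  "ract QZ (gmul f) (gmat 1 Zt Zt, 0) F (coset_rep 0) = F (coset_rep Zt)"
  "ract QZ (gmul f) (gmat 1 Zt Zt, 0) F (coset_rep 1) = - F (coset_rep Zt2)"
  "ract QZ (gmul f) (gmat 1 Zt Zt, 0) F (coset_rep Zt) = - F (coset_rep 0)"
  "ract QZ (gmul f) (gmat 1 Zt Zt, 0) F (coset_rep Zt2) = F (coset_rep 1)"
  "ract QZ (gmul f) (gmat 1 Zt2 Zt, 0) F (coset_rep 0) = F (coset_rep Zt2)"
  "ract QZ (gmul f) (gmat 1 Zt2 Zt, 0) F (coset_rep 1) = F (coset_rep Zt)"
  "ract QZ (gmul f) (gmat 1 Zt2 Zt, 0) F (coset_rep Zt) = - F (coset_rep 1)"
  "ract QZ (gmul f) (gmat 1 Zt2 Zt, 0) F (coset_rep Zt2) = - F (coset_rep 0)"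
  "ract QZ (gmul f) (gmat Zt 0 0, 0) F (coset_rep 0) = F (coset_rep 0)"
  "ract QZ (gmul f) (gmat Zt 0 0, 0) F (coset_rep 1) = F (coset_rep Zt)"
  "ract QZ (gmul f) (gmat Zt 0 0, 0) F (coset_rep Zt) = F (coset_rep Zt2)"
  "ract QZ (gmul f) (gmat Zt 0 0, 0) F (coset_rep Zt2) = F (coset_rep 1)"
  "ract QZ (gmul f) (gmat 1 0 0, 1) F (coset_rep 0) = t * F (coset_rep 0)"
  "ract QZ (gmul f) (gmat 1 0 0, 1) F (coset_rep 1) = - t * F (coset_rep 1)"
  "ract QZ (gmul f) (gmat 1 0 0, 1) F (coset_rep Zt) = - t * F (coset_rep Zt2)"
  "ract QZ (gmul f) (gmat 1 0 0, 1) F (coset_rep Zt2) = - t * F (coset_rep Zt)"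
  by (simp_all add: ract_apply coset_rep_QZ coset_rep_mul_table[OF odd_f] Ind_mul[OF assms]
      C6Z_char_values center C3_trivial)

lemma generators_QZ:
  "(gmat 1 1 Zt, 0) \<in> QZ" "(gmat 1 Zt Zt, 0) \<in> QZ" "(gmat 1 Zt2 Zt, 0) \<in> QZ"
  "(gmat Zt 0 0, 0) \<in> QZ" "(gmat 1 0 0, 1) \<in> QZ"
  by (simp_all add: Qcond_field)

context
  fixes W assumes W: "invariant_subspace QZ (gmul f) W" "W \<subseteq> V"
begin

lemma invariant_nonzero_at_origin:
  assumes "F \<in> W" "F \<noteq> (\<lambda>_. 0)"
  shows "\<exists>G\<in>W. G (coset_rep 0) \<noteq> 0"
proof -
  have "F \<in> V"
    using assms W by blast
  then obtain \<beta> where \<beta>: "F (coset_rep \<beta>) \<noteq> 0"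
    using V_eqI[OF _ Ind_zero] assms(2) by blast
  have W_ract: "ract QZ (gmul f) g F \<in> W" if "g \<in> QZ" for g
    using invariant_subspace_closed(3)[OF W(1) that assms(1)] .
  from F4_cases[of \<beta>] show ?thesis
  proof (elim disjE)
    assume "\<beta> = 0"
    with \<beta> assms(1) show ?thesis
      by blast
  next
    assume "\<beta> = 1"
    with \<beta> W_ract[OF generators_QZ(1)] show ?thesis
      using ract_coset_rep(1)[OF \<open>F \<in> V\<close>] by (intro bexI) simp_all
  next
    assume "\<beta> = Zt"
    with \<beta> W_ract[OF generators_QZ(2)] show ?thesis
      using ract_coset_rep(5)[OF \<open>F \<in> V\<close>] by (intro bexI) simp_all
  next
    assume "\<beta> = Zt2"
    with \<beta> W_ract[OF generators_QZ(3)] show ?thesis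
      using ract_coset_rep(9)[OF \<open>F \<in> V\<close>] by (intro bexI) simp_all
  qed
qed

lemma invariant_contains_delta:
  assumes "G \<in> W" "G (coset_rep 0) \<noteq> 0"
  shows "\<exists>E\<in>W. \<forall>\<beta>. E (coset_rep \<beta>) = (if \<beta> = 0 then 1 else 0)"
proof -
  let ?T = "ract QZ (gmul f) (gmat Zt 0 0, 0)" and ?\<Pi> = "ract QZ (gmul f) (gmat 1 0 0, 1)"
  note W_add = invariant_subspace_closed(1)[OF W(1)]
    and W_smul = invariant_subspace_closed(2)[OF W(1)]
    and W_ract = invariant_subspace_closed(3)[OF W(1)]
  \<comment> \<open>\<open>?T\<close> fixes \<open>coset_rep 0\<close> and cycles the other three representatives, so \<open>P\<close> is
    constant on those; the Frobenius \<open>?\<Pi>\<close> acts on \<open>P\<close> by \<open>t\<close> at \<open>coset_rep 0\<close> and by \<open>-t\<close>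
    on the other three, so \<open>Q\<close> vanishes there.\<close>
  define P where "P = (\<lambda>x. G x + ?T G x + ?T (?T G) x)"
  define Q where "Q = (\<lambda>x. P x + inverse t * ?\<Pi> P x)"
  define E where "E = (\<lambda>x. inverse (6 * G (coset_rep 0)) * Q x)"
  have "P \<in> W"
    unfolding P_def using assms(1) generators_QZ by (intro W_add W_ract)
  then have "Q \<in> W"
    unfolding Q_def using generators_QZ by (intro W_add W_smul W_ract)
  then have "E \<in> W"
    unfolding E_def by (rule W_smul)
  have V: "G \<in> V" "?T G \<in> V" "P \<in> V"
    using \<open>P \<in> W\<close> assms(1) W generators_QZ W_ract by blast+
  have "P (coset_rep 0) = 3 * G (coset_rep 0)"
    "P (coset_rep 1) = G (coset_rep 1) + G (coset_rep Zt) + G (coset_rep Zt2)"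
    "P (coset_rep Zt) = G (coset_rep 1) + G (coset_rep Zt) + G (coset_rep Zt2)"
    "P (coset_rep Zt2) = G (coset_rep 1) + G (coset_rep Zt) + G (coset_rep Zt2)"
    unfolding P_def using ract_coset_rep(13-16)[OF V(1)] ract_coset_rep(13-16)[OF V(2)]
    by (simp_all add: algebra_simps)
  then have "Q (coset_rep 0) = 6 * G (coset_rep 0)" "Q (coset_rep 1) = 0"
    "Q (coset_rep Zt) = 0" "Q (coset_rep Zt2) = 0"
    unfolding Q_def using ract_coset_rep(17-20)[OF V(3)] C6Z_char_values(3) by simp_all
  then have "E (coset_rep \<beta>) = (if \<beta> = 0 then 1 else 0)" for \<beta>
    unfolding E_def using assms(2) F4_cases[of \<beta>] by auto
  with \<open>E \<in> W\<close> show ?thesis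
    by blast
qed

lemma delta_generates:
  assumes "E \<in> W" and E: "\<And>\<beta>. E (coset_rep \<beta>) = (if \<beta> = 0 then 1 else 0)"
  shows "V \<subseteq> W"
proof
  fix F assume F: "F \<in> V"
  let ?I = "ract QZ (gmul f) (gmat 1 1 Zt, 0)" and ?J = "ract QZ (gmul f) (gmat 1 Zt Zt, 0)"
    and ?K = "ract QZ (gmul f) (gmat 1 Zt2 Zt, 0)"
  note W_add = invariant_subspace_closed(1)[OF W(1)]
    and W_smul = invariant_subspace_closed(2)[OF W(1)]
    and W_ract = invariant_subspace_closed(3)[OF W(1)]
  \<comment> \<open>\<open>?I E\<close>, \<open>?J E\<close>, \<open>?K E\<close> are minus the coordinate functions at \<open>1\<close>, \<open>Zt\<close>, \<open>Zt2\<close>.\<close>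
  define C where "C = (\<lambda>x. F (coset_rep 0) * E x + (- F (coset_rep 1)) * ?I E x
    + (- F (coset_rep Zt)) * ?J E x + (- F (coset_rep Zt2)) * ?K E x)"
  have "C \<in> W"
    unfolding C_def using assms(1) generators_QZ by (intro W_add W_smul W_ract)+
  moreover have "E \<in> V"
    using assms(1) W by blast
  then have "C (coset_rep \<beta>) = F (coset_rep \<beta>)" for \<beta>
    using F4_cases[of \<beta>] by (auto simp: C_def ract_coset_rep E)
  then have "C = F"
    using \<open>C \<in> W\<close> W F by (intro V_eqI) auto
  ultimately show "F \<in> W"
    by simp
qed

end

theorem Ind_C6Z_irreducible: "irreducible_rep QZ (gmul f) V"
proof (rule irreducible_repI)
  define F where "F = (\<lambda>x. if x \<in> C6Z then \<phi>2 x else 0)"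
  have "F \<in> V"
    using group.char_extension_in_Ind[OF group_QZ_group[OF odd_f] subgroup_C6Z[OF odd_f]] char2
    by (simp add: F_def)
  moreover have "F (gmat 1 0 0, 0) \<noteq> 0"
    by (simp add: F_def C6Z_char_values)
  ultimately show "V \<noteq> {\<lambda>_. 0}"
    by auto
next
  fix W F assume "invariant_subspace QZ (gmul f) W" "W \<subseteq> V" "F \<in> W" "F \<noteq> (\<lambda>_. 0)"
  then obtain G where "G \<in> W" "G (coset_rep 0) \<noteq> 0"
    using invariant_nonzero_at_origin by meson
  then obtain E where "E \<in> W" "\<forall>\<beta>. E (coset_rep \<beta>) = (if \<beta> = 0 then 1 else 0)"
    using invariant_contains_delta \<open>invariant_subspace QZ (gmul f) W\<close> \<open>W \<subseteq> V\<close> by blast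
  then show "V \<subseteq> W"
    using delta_generates \<open>invariant_subspace QZ (gmul f) W\<close> \<open>W \<subseteq> V\<close> by blast
qed

end

section \<open>A surjection onto \<open>Ind QZ (gmul f) C6Z \<phi>2\<close>\<close>

lemma finite_C6: "finite C6"
proof -
  have "C6 \<subseteq> (\<lambda>(a, c). gmat a 0 c) ` UNIV"
    by (auto simp: C6_eq)
  then show ?thesis
    by (rule finite_subset) simp
qed

definition frob_square_power :: "int \<Rightarrow> elt" where
  "frob_square_power j = (gmat 1 0 0, 2 * j)"

lemma frob_square_power_add:
  "odd f \<Longrightarrow> frob_square_power (i + j) = gmul f (frob_square_power i) (frob_square_power j)"
  by (simp add: frob_square_power_def gmul_gmat algebra_simps)

lemma frob_square_power_mul:
  "odd f \<Longrightarrow> x \<in> QZ \<Longrightarrow> gmul f (frob_square_power j) x = (fst x, 2 * j + snd x)"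
  by (auto simp: frob_square_power_def QZ_iff gmul_gmat)

lemma frob_square_power_Csub: "z \<noteq> F0 \<Longrightarrow> z \<noteq> F1 \<Longrightarrow> frob_square_power j \<in> Csub z"
  by (simp add: frob_square_power_def Qcond_field)

lemma frob_square_power_C6Z: "frob_square_power j \<in> C6Z"
  by (simp add: frob_square_power_def)

lemma C6_times_01_QZ: "x \<in> C6 \<times> {0, 1} \<Longrightarrow> x \<in> QZ"
  by (auto simp: C6_eq Qcond_field)

lemma C6Z_decomposition:
  assumes "odd f" "h \<in> C6Z"
  shows "\<exists>j. \<exists>s\<in>C6 \<times> {0, 1}. h = gmul f (frob_square_power j) s"
proof -
  obtain A n where h: "h = (A, n)" "A \<in> C6"
    using assms(2) by (auto simp: C6Z_def)
  then have "(A, n mod 2) \<in> C6 \<times> {0, 1}"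
    by auto
  moreover from this have "h = gmul f (frob_square_power (n div 2)) (A, n mod 2)"
    using h by (simp add: frob_square_power_mul[OF assms(1)] C6_times_01_QZ)
  ultimately show ?thesis
    by (intro exI bexI)
qed

lemma C6Z_decomposition_unique:
  assumes "odd f" "s \<in> C6 \<times> {0, 1}" "s' \<in> C6 \<times> {0, 1}"
    and "gmul f (frob_square_power j) s = gmul f (frob_square_power j') s'"
  shows "s = s'"
proof -
  obtain A A' n n' where s: "s = (A, n)" "s' = (A', n')" "n \<in> {0, 1}" "n' \<in> {0, 1}"
    using assms(2,3) by auto
  have "A = A'" "2 * j + n = 2 * j' + n'"
    using assms s by (simp_all add: frob_square_power_mul[OF assms(1)] C6_times_01_QZ)
  with s show ?thesis
    by auto presburger+
qed

lemma Ind_averaging_Csub_C6Z: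
  fixes \<phi>1 \<phi>2 :: "elt \<Rightarrow> 'k::field"
  assumes odd_f: "odd f" and z: "z \<noteq> F0" "z \<noteq> F1"
    and char1: "is_char (Csub z) (gmul f) \<phi>1" and char2: "is_char C6Z (gmul f) \<phi>2"
    and frob2: "\<phi>1 (gmat 1 0 0, 2) = \<phi>2 (gmat 1 0 0, 2)"
  shows "Ind_averaging (QZ_group f) (Csub z) C6Z (range frob_square_power) (C6 \<times> {0, 1}) \<phi>1 \<phi>2"
proof (intro Ind_averaging.intro Ind_averaging_axioms.intro)
  note add = frob_square_power_add[OF odd_f]
    and mem = frob_square_power_Csub[OF z] frob_square_power_C6Z
  show "group (QZ_group f)"
    using group_QZ_group[OF odd_f] .
  show "subgroup (Csub z) (QZ_group f)" "subgroup C6Z (QZ_group f)"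
    using odd_f z by (simp_all add: subgroup_Csub subgroup_C6Z)
  show "subgroup (range frob_square_power) (QZ_group f)"
    using add mem(1) subgroup.mem_carrier[OF subgroup_Csub[OF odd_f z]]
    by (intro group.subgroup_range_int_hom[OF group_QZ_group[OF odd_f]]) auto
  show "range frob_square_power \<subseteq> Csub z \<inter> C6Z"
    using mem by blast
  show "is_char (Csub z) (\<otimes>\<^bsub>QZ_group f\<^esub>) \<phi>1" "is_char C6Z (\<otimes>\<^bsub>QZ_group f\<^esub>) \<phi>2"
    using char1 char2 by simp_all
  show "\<phi>1 k = \<phi>2 k" if "k \<in> range frob_square_power" for k
    using that is_char_int_hom[OF char1 mem(1) add] is_char_int_hom[OF char2 mem(2) add] frob2
    by (auto simp: frob_square_power_def)
  show "finite (C6 \<times> {0, 1::int})" "C6 \<times> {0, 1} \<subseteq> C6Z"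
    using finite_C6 by (auto simp: C6Z_def)
  show "\<exists>k\<in>range frob_square_power. \<exists>s\<in>C6 \<times> {0, 1}. h = k \<otimes>\<^bsub>QZ_group f\<^esub> s"
    if "h \<in> C6Z" for h
    using C6Z_decomposition[OF odd_f that] by auto
  show "s = s'" if k: "k \<in> range frob_square_power" "k' \<in> range frob_square_power"
    and s: "s \<in> C6 \<times> {0, 1}" "s' \<in> C6 \<times> {0, 1}"
    and eq: "k \<otimes>\<^bsub>QZ_group f\<^esub> s = k' \<otimes>\<^bsub>QZ_group f\<^esub> s'" for k k' s s'
  proof -
    obtain j j' where "k = frob_square_power j" "k' = frob_square_power j'"
      using k by blast
    then show ?thesis
      using C6Z_decomposition_unique[OF odd_f s] eq by simp
  qed
qed

lemma Ind_Csub_onto_Ind_C6Z: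
  fixes \<phi>1 \<phi>2 :: "elt \<Rightarrow> 'k::field_char_0"
  assumes odd_f: "odd f" and z: "z \<noteq> F0" "z \<noteq> F1"
    and char1: "is_char (Csub z) (gmul f) \<phi>1" and char2: "is_char C6Z (gmul f) \<phi>2"
    and center: "\<phi>1 (gmat 1 0 1, 0) = -1" "\<phi>2 (gmat 1 0 1, 0) = -1"
    and frob2: "\<phi>1 (gmat 1 0 0, 2) = \<phi>2 (gmat 1 0 0, 2)"
    and irr: "irreducible_rep QZ (gmul f) (Ind QZ (gmul f) C6Z \<phi>2)"
  shows "\<exists>\<Psi>. rep_hom QZ (gmul f) (Ind QZ (gmul f) (Csub z) \<phi>1) (Ind QZ (gmul f) C6Z \<phi>2) \<Psi>
    \<and> \<Psi> ` Ind QZ (gmul f) (Csub z) \<phi>1 = Ind QZ (gmul f) C6Z \<phi>2"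
proof -
  let ?S = "C6 \<times> {0, 1::int}"
  interpret Ind_averaging "QZ_group f" "Csub z" C6Z "range frob_square_power" ?S \<phi>1 \<phi>2
    by (rule Ind_averaging_Csub_C6Z[OF odd_f z char1 char2 frob2])
  let ?F = "\<lambda>x. if x \<in> Csub z then \<phi>1 x else 0"
  have F: "?F \<in> Ind QZ (gmul f) (Csub z) \<phi>1"
    using char_extension_in_Ind[OF subgroup_H1 char1] by simp
  have "?S \<inter> Csub z = {(gmat 1 0 0, 0), (gmat 1 0 1, 0)}"
    using z by (auto simp: C6_eq Qcond_field)
  then have "Ind_average (QZ_group f) ?S \<phi>2 ?F (gmat 1 0 0, 0) = 2"
    using Ind_average_char_extension_one center is_char_one[OF subgroup_H1 char1]
      is_char_one[OF subgroup_H2 char2]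
    by simp
  then have "Ind_average (QZ_group f) ?S \<phi>2 ?F \<noteq> (\<lambda>_. 0)"
    by (metis zero_neq_numeral)
  then have "Ind_average (QZ_group f) ?S \<phi>2 ` Ind QZ (gmul f) (Csub z) \<phi>1 = Ind QZ (gmul f) C6Z \<phi>2"
    using rep_hom_onto_irreducible[OF irr _ _ F] Ind_average_rep_hom
      Ind_invariant_subspace[of "Csub z" \<phi>1] subgroup.subset[OF subgroup_H1]
    by simp
  then show ?thesis
    using Ind_average_rep_hom by auto
qed

section \<open>Values of the characters\<close>

lemma C4_char_center:
  assumes "z \<noteq> F0" "z \<noteq> F1" and \<phi>: "is_char (C4 z) mmul \<phi>" "inj_on \<phi> (C4 z)"
  shows "\<phi> (gmat 1 0 0) = 1" "\<phi> (gmat 1 0 1) = -1"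
proof -
  have mem: "gmat 1 0 0 \<in> C4 z" "gmat 1 0 1 \<in> C4 z"
    by (simp_all add: C4_eq[OF assms(1,2)])
  have sq: "mmul (gmat 1 0 0) (gmat 1 0 0) = gmat 1 0 0" "mmul (gmat 1 0 1) (gmat 1 0 1) = gmat 1 0 0"
    by (simp_all add: gmat_mul)
  show "\<phi> (gmat 1 0 0) = 1"
    using is_char_idempotent[OF \<phi>(1) mem(1) sq(1)] .
  show "\<phi> (gmat 1 0 1) = -1"
    using is_char_involution[OF \<phi> mem(1) sq(1) mem(2) sq(2)] by simp
qed

lemma C6Z_char_frobenius_square:
  assumes "odd f" "is_char C6Z (gmul f) \<phi>2"
  shows "\<phi>2 (gmat 1 0 0, 2) = \<phi>2 (gmat 1 0 0, 1) ^ 2"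
  using is_char_mul[OF assms(2), of "(gmat 1 0 0, 1)" "(gmat 1 0 0, 1)"]
  by (simp add: gmul_gmat[OF assms(1)] power2_eq_square)

lemma C6Z_char_on_Zc_C3:
  assumes "z \<noteq> F0" "z \<noteq> F1" "is_char (C4 z) mmul \<phi>" "inj_on \<phi> (C4 z)"
    and "\<forall>x\<in>Zc. \<forall>y\<in>C3. \<phi>2 (mmul x y, 0) = \<phi> x"
  shows "\<phi>2 (gmat 1 0 1, 0) = -1" "\<phi>2 (gmat Zt 0 0, 0) = 1"
proof -
  have "\<phi>2 (mmul x y, 0) = \<phi> x" if "x \<in> Zc" "y \<in> C3" for x y
    using assms(5) that by blast
  from this[of "gmat 1 0 1" "gmat 1 0 0"] this[of "gmat 1 0 0" "gmat Zt 0 0"]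
  show "\<phi>2 (gmat 1 0 1, 0) = -1" "\<phi>2 (gmat Zt 0 0, 0) = 1"
    using C4_char_center[OF assms(1-4)] by (simp_all add: Zc_def C3_def gmat_mul F4_defs_eq)
qed

lemma Csub_char_fourth_power:
  assumes "odd f" "z \<noteq> F0" "z \<noteq> F1" and \<phi>1: "is_char (Csub z) (gmul f) \<phi>1"
  shows "\<phi>1 (gmat 1 z z, 1) ^ 4 = \<phi>1 (gmat 1 0 1, 0) * \<phi>1 (gmat 1 0 0, 2) ^ 2"
proof -
  have z: "z = Zt \<or> z = Zt2"
    using assms(2,3) by (cases z) auto
  let ?a = "(gmat 1 z z, 1::int)" and ?b = "(gmat 1 1 z, 2::int)" and ?e = "(gmat 1 0 0, 2::int)"
    and ?c = "(gmat 1 0 1, 0::int)" and ?c' = "(gmat 1 0 1, 2::int)"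
  have mem: "?a \<in> Csub z" "?b \<in> Csub z" "?e \<in> Csub z" "?c \<in> Csub z" "?c' \<in> Csub z"
    using z by (auto simp: assms(2,3) Qcond_field)
  have "gmul f ?a ?a = ?b" "gmul f ?b ?b = gmul f ?c' ?e" "gmul f ?c ?e = ?c'"
    using z by (auto simp: gmul_gmat[OF assms(1)])
  then have "\<phi>1 ?b = \<phi>1 ?a * \<phi>1 ?a" "\<phi>1 ?b * \<phi>1 ?b = \<phi>1 ?c' * \<phi>1 ?e"
    "\<phi>1 ?c' = \<phi>1 ?c * \<phi>1 ?e"
    using is_char_mul[OF \<phi>1] mem by metis+
  then show ?thesis
    by (simp add: power4_eq_xxxx power2_eq_square ac_simps)
qed

lemma eta_fourth_power:
  fixes s \<eta> :: "'k::field"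
  assumes "odd f" "s ^ 2 = -2" "\<eta> ^ 2 + s ^ (f + 1) * \<eta> + of_nat (2 ^ f) = 0"
  shows "\<eta> ^ 4 = - (of_nat (2 ^ f) ^ 2)"
proof -
  let ?q = "of_nat (2 ^ f) :: 'k" and ?r = "s ^ (f + 1)"
  have "?r ^ 2 = (s ^ 2) ^ (f + 1)"
    by (metis power_mult mult.commute)
  also have "\<dots> = 2 * ?q"
    using assms(1,2) by simp
  finally have r: "?r ^ 2 = 2 * ?q" .
  have \<eta>2: "\<eta> ^ 2 = - (?r * \<eta> + ?q)"
    using assms(3) by (simp add: eq_neg_iff_add_eq_0 algebra_simps)
  have "\<eta> ^ 4 = (\<eta> ^ 2) ^ 2"
    by (simp flip: power_mult)
  also have "\<dots> = (?r * \<eta> + ?q) ^ 2"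
    by (simp only: \<eta>2 power2_minus)
  also have "\<dots> = 2 * ?q * (\<eta> ^ 2 + ?r * \<eta>) + ?q ^ 2"
    using r by (simp add: power2_eq_square algebra_simps)
  also have "\<dots> = - (?q ^ 2)"
  proof -
    have "\<eta> ^ 2 + ?r * \<eta> = - ?q"
      using assms(3) by (simp add: eq_neg_iff_add_eq_0)
    then show ?thesis
      by (simp add: power2_eq_square)
  qed
  finally show ?thesis .
qed

lemma frob_square_chars_agree:
  fixes s :: "'k::field_char_0" and \<phi>1 \<phi>2 :: "elt \<Rightarrow> 'k"
  assumes "odd f" "s ^ 2 = -2" "is_char C6Z (gmul f) \<phi>2"
    and "\<phi>2 (gmat F1 F0 F0, 1) = s ^ f / of_nat (2 ^ f)"
    and "\<phi>1 (gmat F1 F0 F0, 2) = - 1 / of_nat (2 ^ f)"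
  shows "\<phi>1 (gmat 1 0 0, 2) = \<phi>2 (gmat 1 0 0, 2)"
proof -
  have "\<phi>2 (gmat 1 0 0, 2) = (s ^ 2) ^ f / of_nat (2 ^ f) ^ 2"
    using C6Z_char_frobenius_square[OF assms(1,3)] assms(4)
    by (simp add: F4_defs_eq power_divide flip: power_mult) (simp add: mult.commute)
  then show ?thesis
    using assms(1,2,5) by (simp add: F4_defs_eq power2_eq_square)
qed

lemma Csub_char_center:
  fixes s \<eta> :: "'k::field_char_0" and \<phi>1 :: "elt \<Rightarrow> 'k"
  assumes "odd f" "z \<noteq> F0" "z \<noteq> F1" "s ^ 2 = -2"
    and "\<eta> ^ 2 + s ^ (f + 1) * \<eta> + of_nat (2 ^ f) = 0"
    and "is_char (Csub z) (gmul f) \<phi>1"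
    and "\<phi>1 (gmat F1 z z, 1) = \<eta> / of_nat (2 ^ f)"
    and "\<phi>1 (gmat F1 F0 F0, 2) = - 1 / of_nat (2 ^ f)"
  shows "\<phi>1 (gmat 1 0 1, 0) = -1"
proof -
  have "(\<eta> / of_nat (2 ^ f)) ^ 4 = \<phi>1 (gmat 1 0 1, 0) * (- 1 / of_nat (2 ^ f)) ^ 2"
    using Csub_char_fourth_power[OF assms(1-3,6)] assms(7,8) by (simp add: F4_defs_eq)
  then show ?thesis
    using eta_fourth_power[OF assms(1,4,5)] by (simp add: field_simps)
qed

theorem lemma3p1:
  fixes f :: nat and z :: F4
    and \<phi> :: "mat3 \<Rightarrow> 'k::field_char_0"
    and s \<eta> :: 'k
    and \<phi>1 \<phi>2 :: "elt \<Rightarrow> 'k"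
  assumes "alg_closed TYPE('k)"
    and "odd f"
    and "z \<noteq> F0" and "z \<noteq> F1"
    and "is_char (C4 z) mmul \<phi>" and "inj_on \<phi> (C4 z)"
    and "s ^ 2 = -2"
    and "\<eta> ^ 2 + s ^ (f + 1) * \<eta> + of_nat (2 ^ f) = 0"
    and "is_char (Csub z) (gmul f) \<phi>1"
    and "\<phi>1 (gmat F1 z z, 1) = \<eta> / of_nat (2 ^ f)"
    and "\<phi>1 (gmat F1 F0 F0, 2) = - 1 / of_nat (2 ^ f)"
    and "is_char C6Z (gmul f) \<phi>2"
    and "\<forall>x\<in>Zc. \<forall>y\<in>C3. \<phi>2 (mmul x y, 0) = \<phi> x"
    and "\<phi>2 (gmat F1 F0 F0, 1) = s ^ f / of_nat (2 ^ f)"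
  shows "irreducible_rep QZ (gmul f) (Ind QZ (gmul f) C6Z \<phi>2)
    \<and> (\<exists>\<Psi>. rep_hom QZ (gmul f) (Ind QZ (gmul f) (Csub z) \<phi>1) (Ind QZ (gmul f) C6Z \<phi>2) \<Psi>
           \<and> \<Psi> ` (Ind QZ (gmul f) (Csub z) \<phi>1) = Ind QZ (gmul f) C6Z \<phi>2)"
proof -
  have \<phi>2_values: "\<phi>2 (gmat 1 0 1, 0) = -1" "\<phi>2 (gmat Zt 0 0, 0) = 1"
    using C6Z_char_on_Zc_C3[OF assms(3-6,13)] by simp_all
  interpret C6Z_character f \<phi>2
    using assms(2,12) \<phi>2_values by unfold_locales
  have frob2: "\<phi>1 (gmat 1 0 0, 2) = \<phi>2 (gmat 1 0 0, 2)"
    using assms(2,7,12,14,11) by (rule frob_square_chars_agree)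
  have center1: "\<phi>1 (gmat 1 0 1, 0) = -1"
    using assms(2-4,7-11) by (rule Csub_char_center)
  show ?thesis
    using Ind_C6Z_irreducible
      Ind_Csub_onto_Ind_C6Z[OF assms(2-4,9,12) center1 \<phi>2_values(1) frob2 Ind_C6Z_irreducible]
    by blast
qed

end
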